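(* Let $\{\mu_n\}$ and $\mu$ be Borel probability measures on $\mathbb R^s$ with compact supports, and suppose $\mu_n\to\mu$ weakly. If $\mathcal Z(\mu)=\emptyset$, then $\{\mu_n\}$ has a subsequence $\{\mu_{n_k}\}$ that is an equi-positive family, i.e., there is $\epsilon_0>0$ such that for every $x\in[0,1)^s$ and every $k$ there exists $m\in\mathbb Z^s$ with $|\widehat{\mu_{n_k}}(x+m)|>\epsilon_0$.
   Context: $\widehat\mu(\xi)=\int e^{2\pi i\langle x,\xi\rangle}d\mu(x)$, and $\mathcal Z(\mu)=\{\xi\in[0,1)^s:\widehat\mu(\xi+k)=0\text{ for all }k\in\mathbb Z^s\}$. Weak convergence means $\int f\,d\mu_n\to\int f\,d\mu$ for all continuous compactly supported $f$. *)

theory Defs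
  imports "HOL-Probability.Probability"
begin

definition fourier_meas :: "(real^'n) measure \<Rightarrow> real^'n \<Rightarrow> complex" where
  "fourier_meas M \<xi> = integral\<^sup>L M (\<lambda>x. cis (2 * pi * (x \<bullet> \<xi>)))"

definition int_lattice :: "(real^'n) set" where
  "int_lattice = {m. \<forall>i. m $ i \<in> \<int>}"

definition unit_cube :: "(real^'n) set" where
  "unit_cube = {x. \<forall>i. 0 \<le> x $ i \<and> x $ i < 1}"

definition zero_set :: "(real^'n) measure \<Rightarrow> (real^'n) set" where
  "zero_set M = {\<xi> \<in> unit_cube. \<forall>k \<in> int_lattice. fourier_meas M (\<xi> + k) = 0}"

definition borel_prob_cs :: "(real^'n) measure \<Rightarrow> bool" where
  "borel_prob_cs M \<longleftrightarrow> prob_space M \<and> sets M = sets borel \<and>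
     (\<exists>K. compact K \<and> emeasure M (space M - K) = 0)"

definition weak_conv :: "(nat \<Rightarrow> (real^'n) measure) \<Rightarrow> (real^'n) measure \<Rightarrow> bool" where
  "weak_conv Ms M \<longleftrightarrow> (\<forall>f :: real^'n \<Rightarrow> real.
      continuous_on UNIV f \<and> compact (closure {x. f x \<noteq> 0}) \<longrightarrow>
      (\<lambda>n. integral\<^sup>L (Ms n) f) \<longlonglongrightarrow> integral\<^sup>L M f)"

end

theory Submission
  imports Defs
begin

(* The transforms of the mu_n need not converge uniformly, but a uniform estimate survives
   truncation. Choose R with supp mu \<subseteq> cball 0 R and a continuous cutoff f that is 1 on
   cball 0 R and vanishes outside ball 0 (R + 1). The truncated transforms
   T_n(eta) = \<integral> f(x) e^(2 pi i x\<bullet>eta) dmu_n(x) are Lipschitz with constant 2 pi (R + 1)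
   uniformly in n, converge pointwise to hat mu by weak convergence, and differ from hat mu_n by
   at most 1 - \<integral> f dmu_n \<longrightarrow> 0. Hence wherever hat mu(zeta) \<noteq> 0, |hat mu_n| is bounded
   below on a ball around zeta for all large n. As Z(mu) is empty, every point of the closed unit
   cube has a lattice translate where hat mu does not vanish, and compactness of the cube yields a
   single bound and a single threshold N: the tail k \<mapsto> k + N is the subsequence. *)

lemma norm_cis_diff_le: "norm (cis a - cis b) \<le> \<bar>a - b\<bar>"
proof -
  have "cis b * cis (a - b) = cis a"
    by (simp add: cis_mult)
  hence "cis a - cis b = cis b * (cis (a - b) - 1)"
    by (simp add: algebra_simps)
  hence "norm (cis a - cis b) = norm (cis (a - b) - 1)"
    by (simp add: norm_mult)
  also have "\<dots> \<le> \<bar>a - b\<bar>"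
    using iexp_approx1[of "a - b" 0] by (simp add: cis_conv_exp)
  finally show ?thesis .
qed

lemma integrable_bounded_continuous:
  fixes h :: "'a::topological_space \<Rightarrow> 'b::{banach,second_countable_topology}"
  assumes "finite_measure M" "sets M = sets borel" "continuous_on UNIV h" "\<And>x. norm (h x) \<le> B"
  shows "integrable M h"
proof -
  interpret finite_measure M by fact
  have "h \<in> borel_measurable M"
    by (subst measurable_cong_sets[OF assms(2) refl]) (rule borel_measurable_continuous_onI[OF assms(3)])
  thus ?thesis by (intro integrable_const_bound[where B=B]) (auto simp: assms(4))
qed

lemma bounded_continuous_compact_support:
  fixes g :: "'a::topological_space \<Rightarrow> 'b::real_normed_vector"
  assumes "continuous_on UNIV g" "compact (closure {x. g x \<noteq> 0})"
  obtains B where "\<And>x. norm (g x) \<le> B"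
proof -
  let ?K = "closure {x. g x \<noteq> 0}"
  have "continuous_on ?K g"
    by (rule continuous_on_subset[OF assms(1) subset_UNIV])
  hence "compact (g ` ?K)"
    using assms(2) by (rule compact_continuous_image)
  hence "bounded (g ` ?K)"
    by (rule compact_imp_bounded)
  hence "\<exists>B>0. \<forall>y\<in>g ` ?K. norm y \<le> B"
    by (simp only: bounded_pos)
  then obtain B where B: "B > 0" "\<forall>y\<in>g ` ?K. norm y \<le> B"
    by (elim exE conjE)
  have "norm (g x) \<le> B" for x
  proof (cases "g x = 0")
    case False
    hence "x \<in> ?K"
      by (intro closure_subset[THEN subsetD]) simp
    thus ?thesis
      using B(2) by simp
  qed (use B(1) in simp)
  thus ?thesis by (rule that)
qed

lemma eventually_uniform_on_compact:
  fixes S :: "'a::topological_space set" and P :: "real \<Rightarrow> 'b \<Rightarrow> 'a \<Rightarrow> bool"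
  assumes "compact S"
    and mono: "\<And>\<delta> \<delta>' n x. P \<delta> n x \<Longrightarrow> \<delta>' \<le> \<delta> \<Longrightarrow> P \<delta>' n x"
    and local: "\<And>x. x \<in> S \<Longrightarrow> \<exists>U. open U \<and> x \<in> U \<and> (\<exists>\<delta>>0. eventually (\<lambda>n. \<forall>y\<in>U. P \<delta> n y) F)"
  shows "\<exists>\<delta>>0. eventually (\<lambda>n. \<forall>x\<in>S. P \<delta> n x) F"
proof -
  define good where "good U \<longleftrightarrow> (\<exists>\<delta>::real>0. eventually (\<lambda>n. \<forall>y\<in>U. P \<delta> n y) F)" for U
  obtain T where T: "T \<subseteq> {U. open U \<and> good U}" "finite T" "S \<subseteq> \<Union>T"
  proof (rule compactE[OF \<open>compact S\<close>, of "{U. open U \<and> good U}"])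
    show "S \<subseteq> \<Union>{U. open U \<and> good U}"
      using local unfolding good_def by blast
  qed (use that in auto)
  obtain \<delta> where \<delta>: "\<And>U. U \<in> T \<Longrightarrow> \<delta> U > 0 \<and> eventually (\<lambda>n. \<forall>y\<in>U. P (\<delta> U) n y) F"
  proof -
    have "\<forall>U\<in>T. \<exists>\<delta>>0. eventually (\<lambda>n. \<forall>y\<in>U. P \<delta> n y) F"
      using T(1) unfolding good_def by blast
    then show ?thesis using that by (metis (no_types))
  qed
  define d where "d = Min (insert 1 (\<delta> ` T))"
  have d: "0 < d" "\<And>U. U \<in> T \<Longrightarrow> d \<le> \<delta> U"
    using \<delta> T(2) by (auto simp: d_def)
  have "eventually (\<lambda>n. \<forall>U\<in>T. \<forall>y\<in>U. P (\<delta> U) n y) F"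
    using \<delta> T(2) by (intro eventually_ball_finite) auto
  hence "eventually (\<lambda>n. \<forall>x\<in>S. P d n x) F"
  proof eventually_elim
    case (elim n)
    show ?case
    proof
      fix x assume "x \<in> S"
      then obtain U where "U \<in> T" "x \<in> U" using T(3) by blast
      then show "P d n x" using elim d mono by blast
    qed
  qed
  with d(1) show ?thesis by blast
qed

lemma weak_conv_integral_complex:
  fixes Ms :: "nat \<Rightarrow> (real^'n) measure" and g :: "real^'n \<Rightarrow> complex"
  assumes "weak_conv Ms M"
    and "\<And>n. finite_measure (Ms n)" "\<And>n. sets (Ms n) = sets borel"
    and "finite_measure M" "sets M = sets borel"
    and g: "continuous_on UNIV g" "compact (closure {x. g x \<noteq> 0})"
  shows "(\<lambda>n. integral\<^sup>L (Ms n) g) \<longlonglongrightarrow> integral\<^sup>L M g"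
proof -
  obtain B where B: "\<And>x. norm (g x) \<le> B"
    using bounded_continuous_compact_support[OF g] by blast
  have integrable: "integrable N g" if "finite_measure N" "sets N = sets borel" for N
    using integrable_bounded_continuous[OF that g(1) B] .
  have parts: "(\<lambda>n. T (integral\<^sup>L (Ms n) g)) \<longlonglongrightarrow> T (integral\<^sup>L M g)"
    if lin: "bounded_linear T" for T :: "complex \<Rightarrow> real"
  proof -
    have "bounded {x. g x \<noteq> 0}"
      using g(2) by simp
    moreover have "{x. T (g x) \<noteq> 0} \<subseteq> {x. g x \<noteq> 0}"
      using linear_0[OF bounded_linear.linear[OF lin]] by auto
    ultimately have "compact (closure {x. T (g x) \<noteq> 0})"
      by (simp add: bounded_subset)
    moreover have "continuous_on UNIV (\<lambda>x. T (g x))"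
      using bounded_linear.continuous_on[OF lin g(1)] .
    ultimately have "(\<lambda>n. integral\<^sup>L (Ms n) (\<lambda>x. T (g x))) \<longlonglongrightarrow> integral\<^sup>L M (\<lambda>x. T (g x))"
      using assms(1) unfolding weak_conv_def by blast
    moreover have eq: "integral\<^sup>L N (\<lambda>x. T (g x)) = T (integral\<^sup>L N g)"
      if "finite_measure N" "sets N = sets borel" for N
      using integral_bounded_linear[OF lin integrable[OF that]] .
    ultimately show ?thesis
      by (simp only: eq[OF assms(2,3)] eq[OF assms(4,5)])
  qed
  show ?thesis
    unfolding tendsto_complex_iff by (intro conjI parts[OF bounded_linear_Re] parts[OF bounded_linear_Im])
qed

definition cutoff :: "real \<Rightarrow> 'a::real_normed_vector \<Rightarrow> real" where
  "cutoff R x = max 0 (min 1 (R + 1 - norm x))"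

lemma cutoff_nonneg: "0 \<le> cutoff R x"
  and cutoff_le_1: "cutoff R x \<le> 1"
  by (auto simp: cutoff_def)

lemma cutoff_eq_1: "norm x \<le> R \<Longrightarrow> cutoff R x = 1"
  by (simp add: cutoff_def)

lemma norm_less_if_cutoff_nonzero: "cutoff R x \<noteq> 0 \<Longrightarrow> norm x < R + 1"
  by (auto simp: cutoff_def)

lemma continuous_on_cutoff: "continuous_on UNIV (cutoff R)"
  unfolding cutoff_def by (intro continuous_intros)

lemma compact_closure_support_within_cutoff:
  fixes g :: "'a::euclidean_space \<Rightarrow> 'b::zero"
  assumes "\<And>x. g x \<noteq> 0 \<Longrightarrow> cutoff R x \<noteq> 0"
  shows "compact (closure {x. g x \<noteq> 0})"
proof -
  have "{x. g x \<noteq> 0} \<subseteq> ball 0 (R + 1)"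
    using assms norm_less_if_cutoff_nonzero by fastforce
  hence "bounded {x. g x \<noteq> 0}"
    by (rule bounded_subset[OF bounded_ball])
  thus ?thesis by simp
qed

definition truncated_fourier :: "(real^'n) measure \<Rightarrow> real \<Rightarrow> real^'n \<Rightarrow> complex" where
  "truncated_fourier M R \<xi> = integral\<^sup>L M (\<lambda>x. of_real (cutoff R x) * cis (2 * pi * (x \<bullet> \<xi>)))"

lemma
  fixes M :: "(real^'n) measure"
  assumes "finite_measure M" "sets M = sets borel"
  shows integrable_fourier_kernel: "integrable M (\<lambda>x. cis (2 * pi * (x \<bullet> \<xi>)))"
    and integrable_truncated_fourier_kernel:
      "integrable M (\<lambda>x. of_real (cutoff R x) * cis (2 * pi * (x \<bullet> \<xi>)))"
    and integrable_cutoff: "integrable M (cutoff R)"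
proof -
  show "integrable M (\<lambda>x. cis (2 * pi * (x \<bullet> \<xi>)))"
    by (rule integrable_bounded_continuous[OF assms, where B=1]) (auto intro!: continuous_intros)
  show "integrable M (\<lambda>x. of_real (cutoff R x) * cis (2 * pi * (x \<bullet> \<xi>)))"
    by (rule integrable_bounded_continuous[OF assms, where B=1])
      (auto intro!: continuous_intros continuous_on_cutoff simp: norm_mult cutoff_nonneg cutoff_le_1)
  show "integrable M (cutoff R)"
    by (rule integrable_bounded_continuous[OF assms continuous_on_cutoff, where B=1])
      (simp add: cutoff_nonneg cutoff_le_1)
qed

lemma truncated_fourier_eq_fourier_meas:
  fixes M :: "(real^'n) measure"
  assumes "finite_measure M" "sets M = sets borel" and supp: "AE x in M. norm x \<le> R"
  shows "truncated_fourier M R \<xi> = fourier_meas M \<xi>"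
  unfolding truncated_fourier_def fourier_meas_def
proof (rule integral_cong_AE)
  show "(\<lambda>x. of_real (cutoff R x) * cis (2 * pi * (x \<bullet> \<xi>))) \<in> borel_measurable M"
    using integrable_truncated_fourier_kernel[OF assms(1,2)] by (rule borel_measurable_integrable)
  show "(\<lambda>x. cis (2 * pi * (x \<bullet> \<xi>))) \<in> borel_measurable M"
    using integrable_fourier_kernel[OF assms(1,2)] by (rule borel_measurable_integrable)
  show "AE x in M. of_real (cutoff R x) * cis (2 * pi * (x \<bullet> \<xi>)) = cis (2 * pi * (x \<bullet> \<xi>))"
    using supp by eventually_elim (simp add: cutoff_eq_1)
qed

lemma integral_cutoff_eq_1:
  fixes M :: "(real^'n) measure"
  assumes "prob_space M" "sets M = sets borel" and supp: "AE x in M. norm x \<le> R"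
  shows "integral\<^sup>L M (cutoff R) = 1"
proof -
  have "integral\<^sup>L M (cutoff R) = integral\<^sup>L M (\<lambda>x. 1)"
  proof (rule integral_cong_AE)
    show "cutoff R \<in> borel_measurable M"
      using integrable_cutoff[OF prob_space.finite_measure[OF assms(1)] assms(2)]
      by (rule borel_measurable_integrable)
    show "AE x in M. cutoff R x = 1"
      using supp by eventually_elim (simp add: cutoff_eq_1)
  qed simp
  thus ?thesis
    using prob_space.prob_space[OF assms(1)] by simp
qed

lemma norm_fourier_meas_diff_truncated_le:
  fixes M :: "(real^'n) measure"
  assumes M: "prob_space M" "sets M = sets borel"
  shows "norm (fourier_meas M \<xi> - truncated_fourier M R \<xi>) \<le> 1 - integral\<^sup>L M (cutoff R)"
proof -
  interpret prob_space M by (fact M(1))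
  let ?e = "\<lambda>x. cis (2 * pi * (x \<bullet> \<xi>))"
  note integrable = integrable_fourier_kernel[OF finite_measure M(2)]
    integrable_truncated_fourier_kernel[OF finite_measure M(2)]
    integrable_cutoff[OF finite_measure M(2)]
  have "fourier_meas M \<xi> - truncated_fourier M R \<xi> = integral\<^sup>L M (\<lambda>x. of_real (1 - cutoff R x) * ?e x)"
    unfolding fourier_meas_def truncated_fourier_def
    using integrable by (simp add: algebra_simps)
  also have "norm \<dots> \<le> integral\<^sup>L M (\<lambda>x. 1 - cutoff R x)"
  proof (rule Bochner_Integration.integral_norm_bound_integral)
    show "integrable M (\<lambda>x. of_real (1 - cutoff R x) * ?e x)"
      using integrable by (simp add: algebra_simps)
    show "integrable M (\<lambda>x. 1 - cutoff R x)"
      using integrable by simp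
    show "norm (of_real (1 - cutoff R x) * ?e x) \<le> 1 - cutoff R x" for x
    proof -
      have "norm (of_real (1 - cutoff R x) * ?e x) = \<bar>1 - cutoff R x\<bar>"
        by (simp only: norm_mult norm_of_real norm_cis mult_1_right)
      thus ?thesis using cutoff_le_1[of R x] by simp
    qed
  qed
  also have "\<dots> = 1 - integral\<^sup>L M (cutoff R)"
    using integrable prob_space by simp
  finally show ?thesis .
qed

lemma norm_truncated_fourier_kernel_diff_le:
  fixes x \<eta> \<zeta> :: "real^'n"
  assumes "0 \<le> R"
  shows "norm (of_real (cutoff R x) * cis (2 * pi * (x \<bullet> \<eta>)) - of_real (cutoff R x) * cis (2 * pi * (x \<bullet> \<zeta>)))
    \<le> 2 * pi * (R + 1) * dist \<eta> \<zeta>"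
proof (cases "cutoff R x = 0")
  case True
  thus ?thesis using assms by simp
next
  case False
  have "norm (of_real (cutoff R x) * cis (2 * pi * (x \<bullet> \<eta>)) - of_real (cutoff R x) * cis (2 * pi * (x \<bullet> \<zeta>)))
      = cutoff R x * norm (cis (2 * pi * (x \<bullet> \<eta>)) - cis (2 * pi * (x \<bullet> \<zeta>)))"
    by (simp add: norm_mult cutoff_nonneg flip: right_diff_distrib)
  also have "\<dots> \<le> 1 * \<bar>2 * pi * (x \<bullet> \<eta>) - 2 * pi * (x \<bullet> \<zeta>)\<bar>"
    by (intro mult_mono norm_cis_diff_le cutoff_le_1) simp_all
  also have "\<dots> = 2 * pi * \<bar>x \<bullet> (\<eta> - \<zeta>)\<bar>"
    by (simp add: inner_diff_right abs_mult flip: right_diff_distrib)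
  also have "\<dots> \<le> 2 * pi * (norm x * norm (\<eta> - \<zeta>))"
    by (intro mult_left_mono Cauchy_Schwarz_ineq2) simp
  also have "\<dots> \<le> 2 * pi * ((R + 1) * dist \<eta> \<zeta>)"
    unfolding dist_norm using norm_less_if_cutoff_nonzero[OF False]
    by (intro mult_left_mono mult_right_mono) simp_all
  finally show ?thesis by simp
qed

lemma truncated_fourier_lipschitz:
  fixes M :: "(real^'n) measure"
  assumes M: "prob_space M" "sets M = sets borel" and "0 \<le> R"
  shows "norm (truncated_fourier M R \<eta> - truncated_fourier M R \<zeta>) \<le> 2 * pi * (R + 1) * dist \<eta> \<zeta>"
proof -
  interpret prob_space M by (fact M(1))
  note integrable = integrable_truncated_fourier_kernel[OF finite_measure M(2)]
  have "truncated_fourier M R \<eta> - truncated_fourier M R \<zeta> = integral\<^sup>L M (\<lambda>x.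
      of_real (cutoff R x) * cis (2 * pi * (x \<bullet> \<eta>)) - of_real (cutoff R x) * cis (2 * pi * (x \<bullet> \<zeta>)))"
    unfolding truncated_fourier_def using integrable by simp
  also have "norm \<dots> \<le> integral\<^sup>L M (\<lambda>x. 2 * pi * (R + 1) * dist \<eta> \<zeta>)"
    by (rule Bochner_Integration.integral_norm_bound_integral)
      (use integrable norm_truncated_fourier_kernel_diff_le[OF \<open>0 \<le> R\<close>] in auto)
  also have "\<dots> = 2 * pi * (R + 1) * dist \<eta> \<zeta>"
    using prob_space by simp
  finally show ?thesis .
qed

lemma weak_conv_truncated_fourier:
  fixes Ms :: "nat \<Rightarrow> (real^'n) measure"
  assumes "weak_conv Ms M"
    and "\<And>n. finite_measure (Ms n)" "\<And>n. sets (Ms n) = sets borel"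
    and "finite_measure M" "sets M = sets borel"
  shows "(\<lambda>n. truncated_fourier (Ms n) R \<xi>) \<longlonglongrightarrow> truncated_fourier M R \<xi>"
  unfolding truncated_fourier_def
proof (rule weak_conv_integral_complex[OF assms])
  show "continuous_on UNIV (\<lambda>x. of_real (cutoff R x) * cis (2 * pi * (x \<bullet> \<xi>)))"
    by (intro continuous_intros continuous_on_cutoff)
  show "compact (closure {x. of_real (cutoff R x) * cis (2 * pi * (x \<bullet> \<xi>)) \<noteq> 0})"
    by (rule compact_closure_support_within_cutoff) simp
qed

lemma fourier_meas_eventually_bounded_below_near:
  fixes Ms :: "nat \<Rightarrow> (real^'n) measure" and M :: "(real^'n) measure"
  assumes wc: "weak_conv Ms M"
    and Ms: "\<And>n. prob_space (Ms n)" "\<And>n. sets (Ms n) = sets borel"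
    and M: "prob_space M" "sets M = sets borel"
    and "0 \<le> R" and supp: "AE x in M. norm x \<le> R"
    and "fourier_meas M \<zeta> \<noteq> 0"
  shows "\<exists>\<rho>>0. \<exists>\<delta>>0. eventually (\<lambda>n. \<forall>\<eta>\<in>ball \<zeta> \<rho>. \<delta> < norm (fourier_meas (Ms n) \<eta>)) sequentially"
proof -
  define a where "a = norm (fourier_meas M \<zeta>)"
  define L where "L = 2 * pi * (R + 1)"
  have "a > 0" "L > 0"
    using assms(6,8) by (simp_all add: a_def L_def add_nonneg_pos)
  note finite = prob_space.finite_measure[OF Ms(1)] prob_space.finite_measure[OF M(1)]
  have "(\<lambda>n. norm (truncated_fourier (Ms n) R \<zeta>)) \<longlonglongrightarrow> a"
    unfolding a_def truncated_fourier_eq_fourier_meas[OF finite(2) M(2) supp, symmetric]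
    by (intro tendsto_norm weak_conv_truncated_fourier[OF wc finite(1) Ms(2) finite(2) M(2)])
  hence ev_truncated: "eventually (\<lambda>n. a / 2 < norm (truncated_fourier (Ms n) R \<zeta>)) sequentially"
    by (rule order_tendstoD) (use \<open>a > 0\<close> in simp)
  have "(\<lambda>n. integral\<^sup>L (Ms n) (cutoff R)) \<longlonglongrightarrow> 1"
    using wc continuous_on_cutoff compact_closure_support_within_cutoff[of "cutoff R" R]
    unfolding weak_conv_def integral_cutoff_eq_1[OF M supp, symmetric] by blast
  hence ev_cutoff: "eventually (\<lambda>n. 1 - a / 8 < integral\<^sup>L (Ms n) (cutoff R)) sequentially"
    by (rule order_tendstoD) (use \<open>a > 0\<close> in simp)
  have "eventually (\<lambda>n. \<forall>\<eta>\<in>ball \<zeta> (a / (8 * L)). a / 4 < norm (fourier_meas (Ms n) \<eta>)) sequentially"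
    using ev_truncated ev_cutoff
  proof eventually_elim
    case (elim n)
    show ?case
    proof
      fix \<eta> assume "\<eta> \<in> ball \<zeta> (a / (8 * L))"
      hence "L * dist \<eta> \<zeta> < a / 8"
        using \<open>L > 0\<close> by (simp add: dist_commute pos_less_divide_eq algebra_simps)
      moreover have "norm (truncated_fourier (Ms n) R \<eta> - truncated_fourier (Ms n) R \<zeta>) \<le> L * dist \<eta> \<zeta>"
        unfolding L_def using truncated_fourier_lipschitz[OF Ms(1,2) \<open>0 \<le> R\<close>] .
      moreover have "norm (fourier_meas (Ms n) \<eta> - truncated_fourier (Ms n) R \<eta>)
          \<le> 1 - integral\<^sup>L (Ms n) (cutoff R)"
        using norm_fourier_meas_diff_truncated_le[OF Ms(1,2)] .
      moreover have "norm (truncated_fourier (Ms n) R \<zeta>) - norm (truncated_fourier (Ms n) R \<eta>)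
          \<le> norm (truncated_fourier (Ms n) R \<eta> - truncated_fourier (Ms n) R \<zeta>)"
        by (metis norm_minus_commute norm_triangle_ineq2)
      moreover have "norm (truncated_fourier (Ms n) R \<eta>) - norm (fourier_meas (Ms n) \<eta>)
          \<le> norm (fourier_meas (Ms n) \<eta> - truncated_fourier (Ms n) R \<eta>)"
        by (metis norm_minus_commute norm_triangle_ineq2)
      ultimately show "a / 4 < norm (fourier_meas (Ms n) \<eta>)"
        using elim by linarith
    qed
  qed
  moreover have "a / (8 * L) > 0" "a / 4 > 0"
    using \<open>a > 0\<close> \<open>L > 0\<close> by simp_all
  ultimately show ?thesis by blast
qed

lemma unit_cube_subset_cbox: "unit_cube \<subseteq> cbox 0 ((\<chi> i. 1) :: real^'n)"
  unfolding unit_cube_def by (auto simp: mem_box_cart less_imp_le)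

lemma zero_set_empty_imp_shift_nonzero:
  fixes M :: "(real^'n) measure"
  assumes "zero_set M = {}"
  shows "\<exists>m\<in>int_lattice. fourier_meas M (\<xi> + m) \<noteq> 0"
proof -
  define y :: "real^'n" where "y = (\<chi> i. frac (\<xi> $ i))"
  define k :: "real^'n" where "k = (\<chi> i. of_int \<lfloor>\<xi> $ i\<rfloor>)"
  have "y \<in> unit_cube"
    unfolding unit_cube_def y_def by (simp add: frac_lt_1)
  then obtain m where m: "m \<in> int_lattice" "fourier_meas M (y + m) \<noteq> 0"
    using assms unfolding zero_set_def by blast
  have "\<xi> + (m - k) = y + m"
    by (simp add: vec_eq_iff y_def k_def frac_def)
  moreover have "m - k \<in> int_lattice"
    using m(1) unfolding int_lattice_def k_def by auto
  ultimately show ?thesis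
    using m(2) by metis
qed

lemma borel_prob_cs_AE_norm_le:
  fixes M :: "(real^'n) measure"
  assumes "borel_prob_cs M"
  obtains R where "0 \<le> R" "AE x in M. norm x \<le> R"
proof -
  obtain K where M: "sets M = sets borel" and "compact K" and null: "emeasure M (space M - K) = 0"
    using assms unfolding borel_prob_cs_def by auto
  obtain R where R: "0 \<le> R" "\<And>x. x \<in> K \<Longrightarrow> norm x \<le> R"
    using compact_imp_bounded[OF \<open>compact K\<close>] unfolding bounded_pos by (auto intro: less_imp_le)
  have "K \<in> sets M"
    unfolding M using \<open>compact K\<close> by (simp add: borel_closed compact_imp_closed)
  hence "AE x in M. norm x \<le> R"
    by (intro AE_I[OF _ null]) (use R(2) in auto)
  with R(1) show ?thesis by (rule that)
qed

lemma lattice_fourier_eventually_bounded_below_near: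
  fixes Ms :: "nat \<Rightarrow> (real^'n) measure" and M :: "(real^'n) measure"
  assumes "weak_conv Ms M"
    and "\<And>n. prob_space (Ms n)" "\<And>n. sets (Ms n) = sets borel"
    and "prob_space M" "sets M = sets borel"
    and "0 \<le> R" "AE x in M. norm x \<le> R"
    and "zero_set M = {}"
  shows "\<exists>U. open U \<and> \<xi> \<in> U \<and> (\<exists>\<delta>>0. eventually (\<lambda>n. \<forall>\<eta>\<in>U.
           \<exists>m\<in>int_lattice. \<delta> < norm (fourier_meas (Ms n) (\<eta> + m))) sequentially)"
proof -
  obtain m where m: "m \<in> int_lattice" "fourier_meas M (\<xi> + m) \<noteq> 0"
    using zero_set_empty_imp_shift_nonzero[OF assms(8)] by blast
  then obtain \<rho> \<delta> where "\<rho> > 0" "\<delta> > 0" and near: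
    "eventually (\<lambda>n. \<forall>\<eta>\<in>ball (\<xi> + m) \<rho>. \<delta> < norm (fourier_meas (Ms n) \<eta>)) sequentially"
    using fourier_meas_eventually_bounded_below_near[OF assms(1-7)] by blast
  have "eventually (\<lambda>n. \<forall>\<eta>\<in>ball \<xi> \<rho>. \<exists>m\<in>int_lattice. \<delta> < norm (fourier_meas (Ms n) (\<eta> + m))) sequentially"
    using near
  proof eventually_elim
    case (elim n)
    have "\<eta> + m \<in> ball (\<xi> + m) \<rho>" if "\<eta> \<in> ball \<xi> \<rho>" for \<eta>
      using that by (simp add: dist_norm)
    thus ?case using elim m(1) by blast
  qed
  thus ?thesis
    using \<open>\<rho> > 0\<close> \<open>\<delta> > 0\<close> by (intro exI[of _ "ball \<xi> \<rho>"]) auto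
qed

theorem lemma3p7:
  fixes Ms :: "nat \<Rightarrow> (real^'n) measure" and M :: "(real^'n) measure"
  assumes "\<And>n. borel_prob_cs (Ms n)"
    and "borel_prob_cs M"
    and "weak_conv Ms M"
    and "zero_set M = {}"
  shows "\<exists>r :: nat \<Rightarrow> nat. strict_mono r \<and> (\<exists>\<epsilon>0>0. \<forall>x \<in> unit_cube. \<forall>k.
           \<exists>m \<in> int_lattice. norm (fourier_meas (Ms (r k)) (x + m)) > \<epsilon>0)"
proof -
  have Ms: "\<And>n. prob_space (Ms n)" "\<And>n. sets (Ms n) = sets borel"
    and M: "prob_space M" "sets M = sets borel"
    using assms(1,2) unfolding borel_prob_cs_def by auto
  obtain R where R: "0 \<le> R" "AE x in M. norm x \<le> R"
    using borel_prob_cs_AE_norm_le[OF assms(2)] .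
  have "\<exists>\<delta>>0. eventually (\<lambda>n. \<forall>x\<in>cbox 0 (\<chi> i. 1).
      \<exists>m\<in>int_lattice. \<delta> < norm (fourier_meas (Ms n) (x + m))) sequentially"
  proof (rule eventually_uniform_on_compact[OF compact_cbox])
    show "\<exists>m\<in>int_lattice. \<delta>' < norm (fourier_meas (Ms n) (x + m))"
      if "\<exists>m\<in>int_lattice. \<delta> < norm (fourier_meas (Ms n) (x + m))" "\<delta>' \<le> \<delta>" for \<delta> \<delta>' n x
      using that by (meson order.strict_trans1)
  qed (rule lattice_fourier_eventually_bounded_below_near[OF assms(3) Ms M R assms(4)])
  then obtain \<delta> N where "\<delta> > 0" and N:
    "\<And>n x. n \<ge> N \<Longrightarrow> x \<in> unit_cube \<Longrightarrow> \<exists>m\<in>int_lattice. \<delta> < norm (fourier_meas (Ms n) (x + m))"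
    unfolding eventually_sequentially using unit_cube_subset_cbox by (metis subsetD)
  have "\<forall>x\<in>unit_cube. \<forall>k. \<exists>m\<in>int_lattice. \<delta> < norm (fourier_meas (Ms (k + N)) (x + m))"
    using N by simp
  moreover have "strict_mono (\<lambda>k. k + N)"
    by (simp add: strict_mono_def)
  ultimately show ?thesis
    using \<open>\<delta> > 0\<close> by blast
qed

end
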